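(* Fix any non-negative integer load vector $x^{(t_1)}$ with $\|x^{(t_1)}\|_{1} \leq n \cdot \mathrm{e}^{-(\log n)^{\sigma}}$ for some constant $\sigma \in (0,1)$. Consider a round $t_2 > t_1$ such that (for the given matchings) $[t_1,t_2]$ is $(n,n^{-3})$-smoothing, and let $Z:= \sum_{v \in V} y_v x_v^{(t_2)}$, where $y$ is any non-negative vector with $\|y \|_{1} = 1$. Then for any $\delta > 0$ (and $n$ sufficiently large), \[ \Pr\left[ Z \geq \mathrm{e}^{-\frac{1}{5} (\log n)^{\sigma}} + 8 \| y \|_{\infty} (\log n)^{\delta} \right] \leq \mathrm{e}^{-(\log n)^{\delta+\sigma}/ 6}. \]
   Context: $G=(V,E)$ has $n$ nodes; a matching $\mathbf{M}^{(t)}\subseteq E$ is identified with the symmetric matrix with entries $1/2$ on $(u,u),(v,v),(u,v),(v,u)$ for $\{u,v\}\in\mathbf{M}^{(t)}$, $1$ on the diagonal for unmatched nodes, $0$ elsewhere. Discrete protocol: for each $\{u,v\}\in\mathbf{M}^{(t)}$ both nodes get $\lfloor (x^{(t-1)}_u+x^{(t-1)}_v)/2\rfloor$ tokens and the excess token (if the sum is odd) goes to $u$ or $v$ with probability $1/2$ each, independently; unmatched nodes keep their load. Continuous process: $\xi^{(t)}=\xi^{(t-1)}\mathbf{M}^{(t)}$. $[t_1,t_2]$ is $(K,\epsilon)$-smoothing if every $\xi^{(t_1)}\in\mathbb{R}^n$ with discrepancy $\max_{u,v}|\xi_u-\xi_v|\le K$ yields $\xi^{(t_2)}$ with discrepancy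 at most $\epsilon$. The probability is over the random orientations. The paper assumes $n$ sufficiently large throughout. *)

theory Defs
  imports "HOL-Probability.Probability"
begin

text \<open>Nodes are V = {0..<n}. A matching is a set of ordered pairs (u,v), each
  representing the edge {u,v} exactly once, with pairwise disjoint endpoints.\<close>

definition is_matching :: "nat \<Rightarrow> (nat \<times> nat) set \<Rightarrow> bool" where
  "is_matching n M \<longleftrightarrow> M \<subseteq> {0..<n} \<times> {0..<n} \<and> (\<forall>(u,v)\<in>M. u \<noteq> v) \<and>
     (\<forall>e\<in>M. \<forall>e'\<in>M. e \<noteq> e' \<longrightarrow> {fst e, snd e} \<inter> {fst e', snd e'} = {})"

definition matching_matrix :: "(nat \<times> nat) set \<Rightarrow> nat \<Rightarrow> nat \<Rightarrow> real" where
  "matching_matrix M u v =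
     (if (\<exists>e\<in>M. u \<in> {fst e, snd e} \<and> v \<in> {fst e, snd e}) then 1/2
      else if u = v \<and> (\<forall>e\<in>M. u \<notin> {fst e, snd e}) then 1 else 0)"

definition cont_step :: "nat \<Rightarrow> (nat \<times> nat) set \<Rightarrow> (nat \<Rightarrow> real) \<Rightarrow> (nat \<Rightarrow> real)" where
  "cont_step n M \<xi> = (\<lambda>v. \<Sum>u\<in>{0..<n}. \<xi> u * matching_matrix M u v)"

text \<open>xi^(t1 + k) from xi^(t1), using matchings M (t1+1), ..., M (t1+k).\<close>
fun cont_run :: "nat \<Rightarrow> (nat \<Rightarrow> (nat \<times> nat) set) \<Rightarrow> nat \<Rightarrow> nat \<Rightarrow> (nat \<Rightarrow> real) \<Rightarrow> (nat \<Rightarrow> real)" where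
  "cont_run n M t1 0 \<xi> = \<xi>"
| "cont_run n M t1 (Suc k) \<xi> = cont_step n (M (t1 + Suc k)) (cont_run n M t1 k \<xi>)"

definition discrepancy :: "nat \<Rightarrow> (nat \<Rightarrow> real) \<Rightarrow> real" where
  "discrepancy n \<xi> = Max {\<bar>\<xi> u - \<xi> v\<bar> | u v. u \<in> {0..<n} \<and> v \<in> {0..<n}}"

definition smoothing :: "nat \<Rightarrow> (nat \<Rightarrow> (nat \<times> nat) set) \<Rightarrow> nat \<Rightarrow> nat \<Rightarrow> real \<Rightarrow> real \<Rightarrow> bool" where
  "smoothing n M t1 t2 K \<epsilon> \<longleftrightarrow>
     (\<forall>\<xi>. discrepancy n \<xi> \<le> K \<longrightarrow> discrepancy n (cont_run n M t1 (t2 - t1) \<xi>) \<le> \<epsilon>)"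

text \<open>Discrete protocol, one round. The coin c e = True sends the excess token of
  edge e = (u,v) to u, False sends it to v; coins are independent fair.\<close>
definition disc_update :: "(nat \<times> nat) set \<Rightarrow> (nat \<Rightarrow> nat) \<Rightarrow> ((nat \<times> nat) \<Rightarrow> bool) \<Rightarrow> nat \<Rightarrow> nat" where
  "disc_update M x c w =
     (if \<exists>e\<in>M. w \<in> {fst e, snd e} then
        (let e = (THE e. e \<in> M \<and> w \<in> {fst e, snd e}); s = x (fst e) + x (snd e) in
           s div 2 + (if odd s \<and> ((c e \<and> w = fst e) \<or> (\<not> c e \<and> w = snd e)) then 1 else 0))
      else x w)"

definition disc_step :: "(nat \<times> nat) set \<Rightarrow> (nat \<Rightarrow> nat) \<Rightarrow> (nat \<Rightarrow> nat) pmf" where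
  "disc_step M x = map_pmf (disc_update M x) (Pi_pmf M False (\<lambda>_. bernoulli_pmf (1/2)))"

fun disc_run :: "(nat \<Rightarrow> (nat \<times> nat) set) \<Rightarrow> nat \<Rightarrow> nat \<Rightarrow> (nat \<Rightarrow> nat) \<Rightarrow> (nat \<Rightarrow> nat) pmf" where
  "disc_run M t1 0 x = return_pmf x"
| "disc_run M t1 (Suc k) x = disc_run M t1 k x \<bind> disc_step (M (t1 + Suc k))"

end

theory Submission
  imports Defs
begin

text \<open>
  Chernoff bound through an exponential potential. For positive weights \<open>f\<close>, one round of
  the discrete protocol does not increase the expectation of \<open>\<Prod>v. f v ^ x v\<close> beyond the same
  product with \<open>f\<close> replaced by its average \<open>M f\<close> over the matching: on an edge carrying
  \<open>s\<close> tokens the two roundings average to at most \<open>((f u + f v) / 2) ^ s\<close> by AM-GM. Iterating,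
  and moving the averaging operators onto the loads, \<open>E exp (\<lambda> Z)\<close> is at most
  \<open>exp (\<Sum>u. \<xi> u * (exp (\<lambda> y u) - 1))\<close>, where \<open>\<xi>\<close> is the continuous process run from the
  same initial loads. Smoothing makes every \<open>\<xi> u\<close> at most \<open>\<mu> = sum x / n + n powr -3\<close>, and
  convexity of \<open>exp\<close> bounds the exponent by \<open>\<mu> (exp (\<lambda> Y) - 1) / Y\<close> with \<open>Y = Max y\<close>.
  Markov's inequality with \<open>\<lambda> = (ln n) powr \<sigma> / (48 Y)\<close> gives the bound.
\<close>

abbreviation matched :: "(nat \<times> nat) set \<Rightarrow> nat \<Rightarrow> bool" where
  "matched M w \<equiv> \<exists>e\<in>M. w \<in> {fst e, snd e}"

lemma matching_edge_unique:
  assumes "is_matching n M" "e \<in> M" "e' \<in> M" "w \<in> {fst e, snd e}" "w \<in> {fst e', snd e'}"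
  shows "e = e'"
  using assms unfolding is_matching_def by blast

lemma matching_edge_distinct: "is_matching n M \<Longrightarrow> e \<in> M \<Longrightarrow> fst e \<noteq> snd e"
  unfolding is_matching_def by auto

lemma matching_edge_bounded:
  assumes "is_matching n M" "e \<in> M"
  shows "fst e < n" "snd e < n"
  using assms unfolding is_matching_def by auto

lemma finite_matching: "is_matching n M \<Longrightarrow> finite M"
  unfolding is_matching_def by (meson finite_SigmaI finite_atLeastLessThan finite_subset)

lemma the_matching_edge:
  assumes "is_matching n M" "e \<in> M" "w \<in> {fst e, snd e}"
  shows "(THE e'. e' \<in> M \<and> w \<in> {fst e', snd e'}) = e"
  using assms matching_edge_unique[OF assms(1)] by (intro the_equality) blast+

lemma prod_matching_split:
  assumes "is_matching n M"
  shows "(\<Prod>v\<in>{0..<n}. g v) =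
    (\<Prod>v\<in>{v\<in>{0..<n}. \<not> matched M v}. g v) * (\<Prod>e\<in>M. g (fst e) * g (snd e))"
proof -
  have fin: "finite M" using finite_matching[OF assms] .
  have split: "{0..<n} = {v\<in>{0..<n}. \<not> matched M v} \<union> (\<Union>e\<in>M. {fst e, snd e})"
    using matching_edge_bounded[OF assms] by auto
  have "(\<Prod>v\<in>{0..<n}. g v) =
      (\<Prod>v\<in>{v\<in>{0..<n}. \<not> matched M v}. g v) * (\<Prod>v\<in>(\<Union>e\<in>M. {fst e, snd e}). g v)"
    by (subst split, rule prod.union_disjoint) (use fin in auto)
  also have "(\<Prod>v\<in>(\<Union>e\<in>M. {fst e, snd e}). g v) = (\<Prod>e\<in>M. \<Prod>v\<in>{fst e, snd e}. g v)"
    by (rule prod.UNION_disjoint) (use fin assms in \<open>auto simp: is_matching_def\<close>)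
  also have "\<dots> = (\<Prod>e\<in>M. g (fst e) * g (snd e))"
    by (intro prod.cong) (auto simp: matching_edge_distinct[OF assms])
  finally show ?thesis .
qed

text \<open>The (symmetric) matching matrix acting on column vectors, i.e. the adjoint of \<open>cont_step\<close>.\<close>
definition matching_avg :: "nat \<Rightarrow> (nat \<times> nat) set \<Rightarrow> (nat \<Rightarrow> real) \<Rightarrow> nat \<Rightarrow> real" where
  "matching_avg n M f u = (\<Sum>v\<in>{0..<n}. matching_matrix M u v * f v)"

lemma matching_avg_matched:
  assumes "is_matching n M" "e \<in> M" "w \<in> {fst e, snd e}"
  shows "matching_avg n M f w = (f (fst e) + f (snd e)) / 2"
proof -
  have "matching_matrix M w v = (if v \<in> {fst e, snd e} then 1/2 else 0)" for v
  proof -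
    have "(\<exists>e'\<in>M. w \<in> {fst e', snd e'} \<and> v \<in> {fst e', snd e'}) = (v \<in> {fst e, snd e})"
      using assms matching_edge_unique[OF assms(1)] by blast
    then show ?thesis using assms unfolding matching_matrix_def by auto
  qed
  then have "matching_avg n M f w = (\<Sum>v\<in>{0..<n}. if v \<in> {fst e, snd e} then f v / 2 else 0)"
    unfolding matching_avg_def by (intro sum.cong) auto
  also have "\<dots> = (\<Sum>v\<in>{0..<n} \<inter> {fst e, snd e}. f v / 2)"
    by (rule sum.inter_restrict[symmetric]) simp
  also have "\<dots> = (\<Sum>v\<in>{fst e, snd e}. f v / 2)"
    using matching_edge_bounded[OF assms(1,2)] by (intro sum.cong) auto
  finally show ?thesis using matching_edge_distinct[OF assms(1,2)] by (simp add: add_divide_distrib)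
qed

lemma matching_avg_unmatched:
  assumes "\<not> matched M w" "w < n"
  shows "matching_avg n M f w = f w"
proof -
  have "matching_avg n M f w = (\<Sum>v\<in>{0..<n}. if v = w then f v else 0)"
    unfolding matching_avg_def matching_matrix_def using assms(1) by (intro sum.cong) auto
  then show ?thesis using assms by simp
qed

lemma matching_avg_pos:
  assumes "is_matching n M" "\<forall>v<n. 0 < f v" "u < n"
  shows "0 < matching_avg n M f u"
proof (cases "matched M u")
  case True
  then obtain e where e: "e \<in> M" "u \<in> {fst e, snd e}" by blast
  moreover have "0 < f (fst e)" "0 < f (snd e)"
    using assms(2) matching_edge_bounded[OF assms(1) e(1)] by auto
  ultimately show ?thesis unfolding matching_avg_matched[OF assms(1) e] by simp
qed (use assms matching_avg_unmatched in auto)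

lemma matching_avg_one: "is_matching n M \<Longrightarrow> u < n \<Longrightarrow> matching_avg n M (\<lambda>_. 1) u = 1"
  by (cases "matched M u") (auto simp: matching_avg_matched matching_avg_unmatched)

lemma disc_update_unmatched: "\<not> matched M w \<Longrightarrow> disc_update M x c w = x w"
  unfolding disc_update_def by simp

lemma disc_update_fst:
  assumes "is_matching n M" "e \<in> M"
  shows "disc_update M x c (fst e) =
    (x (fst e) + x (snd e)) div 2 + (if odd (x (fst e) + x (snd e)) \<and> c e then 1 else 0)"
  using assms the_matching_edge[OF assms, of "fst e"] matching_edge_distinct[OF assms]
  unfolding disc_update_def by (auto simp: Let_def)

lemma disc_update_snd:
  assumes "is_matching n M" "e \<in> M"
  shows "disc_update M x c (snd e) =
    (x (fst e) + x (snd e)) div 2 + (if odd (x (fst e) + x (snd e)) \<and> \<not> c e then 1 else 0)"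
  using assms the_matching_edge[OF assms, of "snd e"] matching_edge_distinct[OF assms]
  unfolding disc_update_def by (auto simp: Let_def)

text \<open>The two ways of splitting \<open>s\<close> tokens as evenly as possible, weighted by \<open>p\<close> and \<open>q\<close>,
  average to at most the even real split; for odd \<open>s\<close> this is AM-GM \<open>p q \<le> ((p + q)/2)\<^sup>2\<close>.\<close>
lemma coin_average_le_power:
  fixes p q :: real
  assumes "0 \<le> p" "0 \<le> q"
  shows "(p ^ (s div 2 + (if odd s then 1 else 0)) * q ^ (s div 2) +
          p ^ (s div 2) * q ^ (s div 2 + (if odd s then 1 else 0))) / 2 \<le> ((p + q) / 2) ^ s"
proof -
  define k where "k = s div 2"
  have "p * q \<le> ((p + q) / 2)\<^sup>2"
    using zero_le_power2[of "(p - q) / 2"] by (simp add: power2_eq_square field_simps)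
  then have pq: "(p * q) ^ k \<le> ((p + q) / 2) ^ (2 * k)"
    using assms by (simp add: power_mult power_mono)
  show ?thesis
  proof (cases "odd s")
    case True
    then have "s = 2 * k + 1" unfolding k_def by presburger
    moreover have "(p ^ (k + 1) * q ^ k + p ^ k * q ^ (k + 1)) / 2 = (p * q) ^ k * ((p + q) / 2)"
      by (simp add: power_mult_distrib field_simps)
    moreover have "(p * q) ^ k * ((p + q) / 2) \<le> ((p + q) / 2) ^ (2 * k) * ((p + q) / 2)"
      using pq assms by (intro mult_right_mono) auto
    ultimately show ?thesis using True by (simp add: k_def[symmetric] mult.commute)
  next
    case False
    then have "s = 2 * k" unfolding k_def by presburger
    then show ?thesis using False pq by (simp add: k_def[symmetric] power_mult_distrib)
  qed
qed

text \<open>With \<open>f v = exp (\<lambda> * y v)\<close> this is \<open>exp (\<lambda> * (\<Sum>v. y v * x v))\<close>, the quantity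
  controlled by a Chernoff bound.\<close>
definition potential :: "nat \<Rightarrow> (nat \<Rightarrow> real) \<Rightarrow> (nat \<Rightarrow> nat) \<Rightarrow> real" where
  "potential n f x = (\<Prod>v\<in>{0..<n}. f v ^ x v)"

lemma nn_integral_bernoulli_half:
  assumes "\<And>b. 0 \<le> g b"
  shows "(\<integral>\<^sup>+b. ennreal (g b) \<partial>bernoulli_pmf (1/2)) = ennreal ((g True + g False) / 2)"
proof -
  have "(\<integral>\<^sup>+b. ennreal (g b) \<partial>bernoulli_pmf (1/2)) = ennreal (g True) * ennreal (1/2) + ennreal (g False) * ennreal (1/2)"
    using assms by simp
  also have "\<dots> = ennreal (g True * (1/2) + g False * (1/2))"
    using assms[of True] assms[of False] by (simp only: ennreal_mult[symmetric] ennreal_plus[symmetric])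
  finally show ?thesis by (simp add: field_simps)
qed

lemma nn_integral_potential_disc_step:
  assumes M: "is_matching n M" and f: "\<forall>v<n. 0 < f v"
  shows "(\<integral>\<^sup>+x'. potential n f x' \<partial>disc_step M x) \<le> potential n (matching_avg n M f) x"
proof -
  define C where "C = (\<Prod>v\<in>{v\<in>{0..<n}. \<not> matched M v}. f v ^ x v)"
  define S where "S e = x (fst e) + x (snd e)" for e
  define h where "h e b = f (fst e) ^ (S e div 2 + (if odd (S e) \<and> b then 1 else 0)) *
      f (snd e) ^ (S e div 2 + (if odd (S e) \<and> \<not> b then 1 else 0))" for e b
  have fin: "finite M" using finite_matching[OF M] .
  have fpos: "0 < f (fst e)" "0 < f (snd e)" if "e \<in> M" for e
    using f matching_edge_bounded[OF M that] by auto
  have C0: "0 \<le> C" unfolding C_def using f by (intro prod_nonneg) auto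
  have h0: "0 \<le> h e b" if "e \<in> M" for e b unfolding h_def using fpos[OF that] by simp
  have update: "potential n f (disc_update M x c) = C * (\<Prod>e\<in>M. h e (c e))" for c
    unfolding potential_def C_def prod_matching_split[OF M]
    by (intro arg_cong2[where f = "(*)"] prod.cong refl)
       (auto simp: disc_update_unmatched disc_update_fst[OF M] disc_update_snd[OF M] h_def S_def)
  have average: "potential n (matching_avg n M f) x = C * (\<Prod>e\<in>M. ((f (fst e) + f (snd e)) / 2) ^ S e)"
    unfolding potential_def C_def prod_matching_split[OF M]
    by (intro arg_cong2[where f = "(*)"] prod.cong refl)
       (auto simp: matching_avg_unmatched matching_avg_matched[OF M] S_def power_add)
  have "(\<integral>\<^sup>+x'. potential n f x' \<partial>disc_step M x) =
      (\<integral>\<^sup>+c. ennreal C * (\<Prod>e\<in>M. ennreal (h e (c e))) \<partial>Pi_pmf M False (\<lambda>_. bernoulli_pmf (1/2)))"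
    unfolding disc_step_def nn_integral_map_pmf update
    by (intro nn_integral_cong) (simp add: C0 h0 ennreal_mult prod_ennreal prod_nonneg)
  also have "\<dots> = ennreal C * (\<Prod>e\<in>M. \<integral>\<^sup>+b. h e b \<partial>bernoulli_pmf (1/2))"
    by (simp add: nn_integral_cmult nn_integral_prod_Pi_pmf[OF fin, where f = "\<lambda>e b. ennreal (h e b)"])
  also have "\<dots> = ennreal C * (\<Prod>e\<in>M. ennreal ((h e True + h e False) / 2))"
    using h0 by (intro arg_cong2[where f = "(*)"] prod.cong refl nn_integral_bernoulli_half) auto
  also have "\<dots> = ennreal (C * (\<Prod>e\<in>M. (h e True + h e False) / 2))"
    using C0 h0 by (simp add: ennreal_mult prod_ennreal prod_nonneg)
  also have "\<dots> \<le> potential n (matching_avg n M f) x"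
    unfolding average
  proof (intro ennreal_leI mult_left_mono[OF _ C0] prod_mono conjI)
    fix e assume e: "e \<in> M"
    show "0 \<le> (h e True + h e False) / 2" using h0[OF e] by simp
    show "(h e True + h e False) / 2 \<le> ((f (fst e) + f (snd e)) / 2) ^ S e"
      unfolding h_def using coin_average_le_power[of "f (fst e)" "f (snd e)" "S e"] fpos[OF e] by simp
  qed
  finally show ?thesis .
qed

text \<open>\<open>matching_avg_run n M t1 k f\<close> is the column vector \<open>M(t1+1) \<cdots> M(t1+k) f\<close>.\<close>
fun matching_avg_run ::
  "nat \<Rightarrow> (nat \<Rightarrow> (nat \<times> nat) set) \<Rightarrow> nat \<Rightarrow> nat \<Rightarrow> (nat \<Rightarrow> real) \<Rightarrow> nat \<Rightarrow> real" where
  "matching_avg_run n M t1 0 f = f"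
| "matching_avg_run n M t1 (Suc k) f = matching_avg_run n M t1 k (matching_avg n (M (t1 + Suc k)) f)"

lemma matching_avg_run_pos:
  assumes "\<forall>t. is_matching n (M t)" "\<forall>v<n. 0 < f v"
  shows "\<forall>v<n. 0 < matching_avg_run n M t1 k f v"
  using assms(2) by (induction k arbitrary: f) (simp_all add: assms(1) matching_avg_pos)

lemma nn_integral_potential_disc_run:
  assumes M: "\<forall>t. is_matching n (M t)" and f: "\<forall>v<n. 0 < f v"
  shows "(\<integral>\<^sup>+x'. potential n f x' \<partial>disc_run M t1 k x) \<le> potential n (matching_avg_run n M t1 k f) x"
  using f
proof (induction k arbitrary: f)
  case 0
  then show ?case by simp
next
  case (Suc k)
  let ?M = "M (t1 + Suc k)"
  have "(\<integral>\<^sup>+x'. potential n f x' \<partial>disc_run M t1 (Suc k) x) =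
      (\<integral>\<^sup>+x''. (\<integral>\<^sup>+x'. potential n f x' \<partial>disc_step ?M x'') \<partial>disc_run M t1 k x)"
    by simp
  also have "\<dots> \<le> (\<integral>\<^sup>+x''. potential n (matching_avg n ?M f) x'' \<partial>disc_run M t1 k x)"
    using nn_integral_potential_disc_step M Suc.prems by (intro nn_integral_mono) blast
  also have "\<dots> \<le> potential n (matching_avg_run n M t1 (Suc k) f) x"
    using Suc.IH M Suc.prems matching_avg_pos by simp
  finally show ?case .
qed

lemma sum_cont_run_mult:
  "(\<Sum>u\<in>{0..<n}. cont_run n M t1 k \<xi> u * f u) = (\<Sum>v\<in>{0..<n}. \<xi> v * matching_avg_run n M t1 k f v)"
proof (induction k arbitrary: f)
  case (Suc k)
  let ?A = "matching_matrix (M (t1 + Suc k))"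
  have "(\<Sum>v\<in>{0..<n}. cont_run n M t1 (Suc k) \<xi> v * f v) =
      (\<Sum>v\<in>{0..<n}. \<Sum>u\<in>{0..<n}. cont_run n M t1 k \<xi> u * (?A u v * f v))"
    by (simp only: cont_run.simps cont_step_def sum_distrib_right mult.assoc)
  also have "\<dots> = (\<Sum>u\<in>{0..<n}. cont_run n M t1 k \<xi> u * matching_avg n (M (t1 + Suc k)) f u)"
    unfolding matching_avg_def sum_distrib_left by (rule sum.swap)
  finally show ?case using Suc by simp
qed simp

lemma sum_cont_step:
  assumes "is_matching n M"
  shows "(\<Sum>v\<in>{0..<n}. cont_step n M \<xi> v) = (\<Sum>u\<in>{0..<n}. \<xi> u)"
proof -
  have "(\<Sum>v\<in>{0..<n}. cont_step n M \<xi> v) = (\<Sum>u\<in>{0..<n}. \<xi> u * matching_avg n M (\<lambda>_. 1) u)"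
    unfolding cont_step_def matching_avg_def sum_distrib_left mult_1_right by (rule sum.swap)
  then show ?thesis using matching_avg_one[OF assms] by simp
qed

lemma sum_cont_run:
  "\<forall>t. is_matching n (M t) \<Longrightarrow> (\<Sum>v\<in>{0..<n}. cont_run n M t1 k \<xi> v) = (\<Sum>u\<in>{0..<n}. \<xi> u)"
  by (induction k) (simp_all add: sum_cont_step)

lemma cont_run_nonneg: "\<forall>v<n. 0 \<le> \<xi> v \<Longrightarrow> \<forall>v<n. 0 \<le> cont_run n M t1 k \<xi> v"
  by (induction k)
     (auto simp: cont_step_def matching_matrix_def intro!: sum_nonneg mult_nonneg_nonneg)

lemma potential_le_exp:
  assumes "\<forall>v<n. 0 < g v"
  shows "potential n g x \<le> exp (\<Sum>v\<in>{0..<n}. real (x v) * (g v - 1))"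
proof -
  have "potential n g x \<le> (\<Prod>v\<in>{0..<n}. exp (g v - 1) ^ x v)"
    unfolding potential_def
  proof (intro prod_mono conjI)
    fix v assume "v \<in> {0..<n}"
    then have "0 < g v" using assms by simp
    then show "0 \<le> g v ^ x v" "g v ^ x v \<le> exp (g v - 1) ^ x v"
      using exp_ge_add_one_self[of "g v - 1"] by (simp_all add: power_mono)
  qed
  then show ?thesis by (simp add: exp_sum exp_of_nat_mult)
qed

lemma nn_integral_potential_disc_run_le_exp:
  assumes M: "\<forall>t. is_matching n (M t)" and f: "\<forall>v<n. 0 < f v"
  shows "(\<integral>\<^sup>+x'. potential n f x' \<partial>disc_run M t1 k x) \<le>
    exp (\<Sum>u\<in>{0..<n}. cont_run n M t1 k (\<lambda>v. real (x v)) u * (f u - 1))"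
proof -
  let ?\<xi> = "cont_run n M t1 k (\<lambda>v. real (x v))" and ?B = "matching_avg_run n M t1 k f"
  have "(\<Sum>v\<in>{0..<n}. real (x v) * (?B v - 1)) =
      (\<Sum>v\<in>{0..<n}. real (x v) * ?B v) - (\<Sum>v\<in>{0..<n}. real (x v))"
    by (simp add: algebra_simps sum_subtractf)
  also have "\<dots> = (\<Sum>u\<in>{0..<n}. ?\<xi> u * f u) - (\<Sum>u\<in>{0..<n}. ?\<xi> u)"
    by (simp only: sum_cont_run_mult sum_cont_run[OF M])
  also have "\<dots> = (\<Sum>u\<in>{0..<n}. ?\<xi> u * (f u - 1))"
    by (simp add: algebra_simps sum_subtractf)
  finally have "potential n ?B x \<le> exp (\<Sum>u\<in>{0..<n}. ?\<xi> u * (f u - 1))"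
    using potential_le_exp[OF matching_avg_run_pos[OF M f]] by metis
  then show ?thesis
    using nn_integral_potential_disc_run[OF M f] by (meson ennreal_leI order.trans)
qed

lemma prob_disc_run_weighted_load_ge:
  assumes M: "\<forall>t. is_matching n (M t)" and "0 < lam"
  shows "measure_pmf.prob (disc_run M t1 k x) {x'. T \<le> (\<Sum>v\<in>{0..<n}. y v * real (x' v))} \<le>
    exp (- lam * T + (\<Sum>u\<in>{0..<n}. cont_run n M t1 k (\<lambda>v. real (x v)) u * (exp (lam * y u) - 1)))"
proof -
  let ?p = "disc_run M t1 k x" and ?Z = "\<lambda>x'. \<Sum>v\<in>{0..<n}. y v * real (x' v)"
  have potential: "potential n (\<lambda>v. exp (lam * y v)) x' = exp (lam * ?Z x')" for x'
    unfolding potential_def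
    by (simp add: exp_sum sum_distrib_left exp_of_nat_mult[symmetric] algebra_simps)
  have "ennreal (measure_pmf.prob ?p {x'. T \<le> ?Z x'}) \<le>
      ennreal (exp (- lam * T)) * (\<integral>\<^sup>+x'. potential n (\<lambda>v. exp (lam * y v)) x' \<partial>?p)"
    using Chernoff_ineq_nn_integral_ge[OF \<open>0 < lam\<close>, of UNIV ?p ?Z T]
    by (simp add: potential measure_pmf.emeasure_eq_measure)
  also have "\<dots> \<le> ennreal (exp (- lam * T)) *
      exp (\<Sum>u\<in>{0..<n}. cont_run n M t1 k (\<lambda>v. real (x v)) u * (exp (lam * y u) - 1))"
    by (intro mult_left_mono nn_integral_potential_disc_run_le_exp M) simp_all
  finally have "ennreal (measure_pmf.prob ?p {x'. T \<le> ?Z x'}) \<le> ennreal (exp (- lam * T) *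
      exp (\<Sum>u\<in>{0..<n}. cont_run n M t1 k (\<lambda>v. real (x v)) u * (exp (lam * y u) - 1)))"
    by (simp add: ennreal_mult)
  then show ?thesis by (simp add: exp_add[symmetric])
qed

lemma discrepancy_le_iff:
  assumes "0 < n"
  shows "discrepancy n \<xi> \<le> K \<longleftrightarrow> (\<forall>u<n. \<forall>v<n. \<bar>\<xi> u - \<xi> v\<bar> \<le> K)"
proof -
  have "{\<bar>\<xi> u - \<xi> v\<bar> | u v. u \<in> {0..<n} \<and> v \<in> {0..<n}} = (\<lambda>(u, v). \<bar>\<xi> u - \<xi> v\<bar>) ` ({0..<n} \<times> {0..<n})"
    by fastforce
  then show ?thesis unfolding discrepancy_def using assms by (subst Max_le_iff) auto
qed

lemma cont_run_le_mean_add: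
  assumes M: "\<forall>t. is_matching n (M t)" and sm: "smoothing n M t1 t2 K \<epsilon>"
    and \<xi>: "\<forall>v<n. 0 \<le> \<xi> v \<and> \<xi> v \<le> K" and u: "u < n"
  shows "cont_run n M t1 (t2 - t1) \<xi> u \<le> (\<Sum>v\<in>{0..<n}. \<xi> v) / n + \<epsilon>"
proof -
  let ?\<xi>' = "cont_run n M t1 (t2 - t1) \<xi>"
  have n: "0 < n" using u by simp
  have "\<bar>\<xi> v - \<xi> w\<bar> \<le> K" if "v < n" "w < n" for v w
    using \<xi>[rule_format, OF that(1)] \<xi>[rule_format, OF that(2)] by linarith
  then have "discrepancy n \<xi> \<le> K" by (simp add: discrepancy_le_iff[OF n])
  then have "discrepancy n ?\<xi>' \<le> \<epsilon>" using sm unfolding smoothing_def by blast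
  then have "\<bar>?\<xi>' u - ?\<xi>' v\<bar> \<le> \<epsilon>" if "v < n" for v
    using u that by (simp add: discrepancy_le_iff[OF n])
  then have "?\<xi>' u \<le> ?\<xi>' v + \<epsilon>" if "v < n" for v
    using that abs_le_iff by fastforce
  then have "(\<Sum>v\<in>{0..<n}. ?\<xi>' u) \<le> (\<Sum>v\<in>{0..<n}. ?\<xi>' v + \<epsilon>)"
    by (intro sum_mono) simp
  then have "n * ?\<xi>' u \<le> (\<Sum>v\<in>{0..<n}. \<xi> v) + n * \<epsilon>"
    by (simp add: sum.distrib sum_cont_run[OF M])
  then show ?thesis using n by (simp add: field_simps)
qed

lemma sum_mult_exp_weight_le:
  fixes \<xi> y :: "nat \<Rightarrow> real"
  assumes \<xi>: "\<forall>u<n. 0 \<le> \<xi> u \<and> \<xi> u \<le> \<mu>" and y: "\<forall>u<n. 0 \<le> y u \<and> y u \<le> Y"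
    and "0 < Y" "0 \<le> lam" and y1: "(\<Sum>u\<in>{0..<n}. y u) = 1"
  shows "(\<Sum>u\<in>{0..<n}. \<xi> u * (exp (lam * y u) - 1)) \<le> \<mu> * (exp (lam * Y) - 1) / Y"
proof -
  have "(\<Sum>u\<in>{0..<n}. \<xi> u * (exp (lam * y u) - 1)) \<le> (\<Sum>u\<in>{0..<n}. \<mu> * (exp (lam * Y) - 1) / Y * y u)"
  proof (intro sum_mono)
    fix u assume "u \<in> {0..<n}"
    then have yu: "0 \<le> y u / Y" "y u / Y \<le> 1" and \<xi>u: "0 \<le> \<xi> u" "\<xi> u \<le> \<mu>"
      using \<xi> y \<open>0 < Y\<close> by auto
    have conv: "exp ((y u / Y) * (lam * Y)) \<le> 1 + (y u / Y) * (exp (lam * Y) - 1)"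
      using convex_onD[OF exp_convex, of "y u / Y" 0 "lam * Y"] yu by (simp add: algebra_simps)
    have "(y u / Y) * (lam * Y) = lam * y u" using \<open>0 < Y\<close> by simp
    then have "exp (lam * y u) - 1 \<le> (exp (lam * Y) - 1) / Y * y u"
      using conv by (simp add: field_simps)
    moreover have "0 \<le> exp (lam * y u) - 1" using y \<open>u \<in> {0..<n}\<close> \<open>0 \<le> lam\<close> by simp
    ultimately have "\<xi> u * (exp (lam * y u) - 1) \<le> \<mu> * ((exp (lam * Y) - 1) / Y * y u)"
      using \<xi>u by (intro mult_mono) auto
    then show "\<xi> u * (exp (lam * y u) - 1) \<le> \<mu> * (exp (lam * Y) - 1) / Y * y u"
      by simp
  qed
  also have "\<dots> = \<mu> * (exp (lam * Y) - 1) / Y"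
    unfolding sum_distrib_left[symmetric] y1 by simp
  finally show ?thesis .
qed

lemma small_mean_exp_moment_le:
  fixes s L \<mu> :: real
  assumes "48 \<le> s" "s \<le> L" "0 \<le> \<mu>" "\<mu> \<le> exp (- s) + exp (- 3 * L)"
  shows "\<mu> * (exp (s / 48) - 1) \<le> s * exp (- (1/5) * s) / 48"
proof -
  have "exp (- 3 * L) \<le> exp (- 3 * s)" using assms by simp
  then have "\<mu> \<le> exp (- s) + exp (- 3 * s)" using assms by linarith
  then have "\<mu> * (exp (s / 48) - 1) \<le> (exp (- s) + exp (- 3 * s)) * exp (s / 48)"
    using assms by (intro mult_mono) auto
  also have "\<dots> = exp (- s + s / 48) + exp (- 3 * s + s / 48)"
    by (simp only: distrib_right exp_add)
  also have "\<dots> \<le> 2 * exp (- 47 * s / 48)" using assms by simp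
  also have "\<dots> \<le> exp (s * (47/48 - 1/5)) * exp (- 47 * s / 48)"
  proof (intro mult_right_mono)
    show "2 \<le> exp (s * (47/48 - 1/5))"
    proof -
      have "1 \<le> s * (47/48 - 1/5)" using assms by simp
      then show ?thesis using exp_ge_add_one_self[of "s * (47/48 - 1/5)"] by linarith
    qed
  qed simp
  also have "\<dots> = exp (- (1/5) * s)" by (simp add: exp_add[symmetric] algebra_simps)
  also have "\<dots> \<le> s * exp (- (1/5) * s) / 48" using assms by simp
  finally show ?thesis .
qed

lemma Max_weight_pos:
  fixes y :: "nat \<Rightarrow> real"
  assumes "\<forall>v\<in>{0..<n}. 0 \<le> y v" "(\<Sum>v\<in>{0..<n}. y v) = 1"
  shows "0 < Max (y ` {0..<n})"
proof (rule ccontr)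
  assume "\<not> 0 < Max (y ` {0..<n})"
  moreover have "y v \<le> Max (y ` {0..<n})" if "v \<in> {0..<n}" for v
    using that by (intro Max_ge) auto
  ultimately have "y v \<le> 0" if "v \<in> {0..<n}" for v
    using that by (meson not_less order_trans)
  then have "(\<Sum>v\<in>{0..<n}. y v) \<le> 0" by (intro sum_nonpos) auto
  then show False using assms(2) by simp
qed

lemma prob_weighted_load_ge_of_smoothing:
  assumes M: "\<forall>t. is_matching n (M t)" and sm: "smoothing n M t1 t2 (real n) \<epsilon>"
    and load: "(\<Sum>v\<in>{0..<n}. x v) \<le> n"
    and y0: "\<forall>v\<in>{0..<n}. 0 \<le> y v" and y1: "(\<Sum>v\<in>{0..<n}. y v) = 1" and "0 < lam"
  defines "Y \<equiv> Max (y ` {0..<n})" and "\<mu> \<equiv> real (\<Sum>v\<in>{0..<n}. x v) / n + \<epsilon>"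
  shows "measure_pmf.prob (disc_run M t1 (t2 - t1) x) {x'. T \<le> (\<Sum>v\<in>{0..<n}. y v * real (x' v))} \<le>
    exp (- lam * T + \<mu> * (exp (lam * Y) - 1) / Y)"
proof -
  let ?\<xi> = "cont_run n M t1 (t2 - t1) (\<lambda>v. real (x v))"
  have "x v \<le> n" if "v < n" for v
    using member_le_sum[of v "{0..<n}" x] that load by simp
  then have x: "\<forall>v<n. 0 \<le> real (x v) \<and> real (x v) \<le> real n" by simp
  have "\<forall>u<n. 0 \<le> ?\<xi> u \<and> ?\<xi> u \<le> \<mu>"
    using cont_run_nonneg[of n "\<lambda>v. real (x v)"] cont_run_le_mean_add[OF M sm x]
    unfolding \<mu>_def of_nat_sum by simp
  moreover have "\<forall>u<n. 0 \<le> y u \<and> y u \<le> Y" using y0 unfolding Y_def by simp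
  ultimately have "(\<Sum>u\<in>{0..<n}. ?\<xi> u * (exp (lam * y u) - 1)) \<le> \<mu> * (exp (lam * Y) - 1) / Y"
    using Max_weight_pos[OF y0 y1] \<open>0 < lam\<close> y1 unfolding Y_def[symmetric]
    by (intro sum_mult_exp_weight_le) simp_all
  then show ?thesis
    using prob_disc_run_weighted_load_ge[OF M \<open>0 < lam\<close>, of t1 "t2 - t1" x T y]
    by (smt (verit) exp_le_cancel_iff)
qed

lemma eventually_le_ln_powr:
  fixes c \<sigma> :: real
  assumes "0 < \<sigma>"
  shows "\<forall>\<^sub>F n in sequentially. c \<le> ln (real n) powr \<sigma>"
proof -
  have "\<forall>\<^sub>F n in sequentially. max 1 c powr (1 / \<sigma>) \<le> ln (real n)"
    using filterlim_compose[OF ln_at_top filterlim_real_sequentially] by (simp add: filterlim_at_top)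
  then show ?thesis
  proof (rule eventually_mono)
    fix n assume "max 1 c powr (1 / \<sigma>) \<le> ln (real n)"
    then have "(max 1 c powr (1 / \<sigma>)) powr \<sigma> \<le> ln (real n) powr \<sigma>"
      using assms by (intro powr_mono2) auto
    then show "c \<le> ln (real n) powr \<sigma>" using assms by (simp add: powr_powr)
  qed
qed

lemma ln_powr_le_ln:
  assumes "0 < \<sigma>" "\<sigma> \<le> 1" "1 \<le> ln (real n) powr \<sigma>"
  shows "0 < n" "ln (real n) powr \<sigma> \<le> ln (real n)"
proof -
  show "0 < n" using assms(3) by (cases n) auto
  then have "0 \<le> ln (real n)" by simp
  then have "1 \<le> ln (real n)"
    using assms by (metis not_le powr01_less_one powr_eq_0_iff order_le_imp_less_or_eq)
  then show "ln (real n) powr \<sigma> \<le> ln (real n)"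
    using powr_mono[of \<sigma> 1 "ln (real n)"] assms(2) by simp
qed

lemma chernoff_exponent_le:
  fixes s L \<mu> Y D :: real
  assumes "48 \<le> s" "s \<le> L" "0 \<le> \<mu>" "\<mu> \<le> exp (- s) + exp (- 3 * L)" "0 < Y"
  shows "- (s / (48 * Y)) * (exp (- (1/5) * s) + 8 * Y * D) + \<mu> * (exp (s / (48 * Y) * Y) - 1) / Y
    \<le> - (D * s) / 6"
proof -
  have "\<mu> * (exp (s / 48) - 1) / Y \<le> s * exp (- (1/5) * s) / 48 / Y"
    using divide_right_mono[OF small_mean_exp_moment_le[OF assms(1-4)], of Y] assms(5) by simp
  moreover have "s / (48 * Y) * Y = s / 48" using assms(5) by simp
  moreover have "- (s / (48 * Y)) * (exp (- (1/5) * s) + 8 * Y * D) = - (s * exp (- (1/5) * s) / 48 / Y) - D * s / 6"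
    using assms(5) by (simp add: field_simps)
  ultimately show ?thesis by simp
qed

lemma weighted_load_tail_bound:
  fixes \<sigma> \<delta> :: real and y :: "nat \<Rightarrow> real"
  assumes "0 < \<sigma>" "\<sigma> < 1" and s: "48 \<le> ln (real n) powr \<sigma>"
    and M: "\<forall>t. is_matching n (M t)"
    and load: "real (\<Sum>v\<in>{0..<n}. x v) \<le> real n * exp (- (ln (real n) powr \<sigma>))"
    and sm: "smoothing n M t1 t2 (real n) (real n powr (-3))"
    and y0: "\<forall>v\<in>{0..<n}. 0 \<le> y v" and y1: "(\<Sum>v\<in>{0..<n}. y v) = 1"
  shows "measure_pmf.prob (disc_run M t1 (t2 - t1) x)
      {x'. (\<Sum>v\<in>{0..<n}. y v * real (x' v)) \<ge>
             exp (- (1/5) * ln (real n) powr \<sigma>) + 8 * Max (y ` {0..<n}) * ln (real n) powr \<delta>}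
    \<le> exp (- (ln (real n) powr (\<delta> + \<sigma>)) / 6)"
proof -
  define L where "L = ln (real n)"
  define Y where "Y = Max (y ` {0..<n})"
  define \<mu> where "\<mu> = real (\<Sum>v\<in>{0..<n}. x v) / n + real n powr (-3)"
  have n: "0 < n" and sL: "L powr \<sigma> \<le> L"
    using ln_powr_le_ln[of \<sigma> n] assms(1,2) s unfolding L_def by auto
  have Y: "0 < Y" unfolding Y_def using Max_weight_pos[OF y0 y1] .
  have "exp (- (L powr \<sigma>)) \<le> 1" using s unfolding L_def by simp
  then have "(\<Sum>v\<in>{0..<n}. x v) \<le> n"
    using load mult_left_le[of _ "real n"] unfolding L_def by (smt (verit) of_nat_0_le_iff of_nat_le_iff)
  moreover have "0 < L powr \<sigma> / (48 * Y)" using s Y unfolding L_def by (intro divide_pos_pos) linarith+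
  ultimately have "measure_pmf.prob (disc_run M t1 (t2 - t1) x)
      {x'. exp (- (1/5) * L powr \<sigma>) + 8 * Y * L powr \<delta> \<le> (\<Sum>v\<in>{0..<n}. y v * real (x' v))}
    \<le> exp (- (L powr \<sigma> / (48 * Y)) * (exp (- (1/5) * L powr \<sigma>) + 8 * Y * L powr \<delta>) +
        \<mu> * (exp (L powr \<sigma> / (48 * Y) * Y) - 1) / Y)"
    unfolding Y_def \<mu>_def by (rule prob_weighted_load_ge_of_smoothing[OF M sm _ y0 y1])
  also have "\<dots> \<le> exp (- (L powr \<delta> * L powr \<sigma>) / 6)"
  proof -
    have "real (\<Sum>v\<in>{0..<n}. x v) / n \<le> exp (- (L powr \<sigma>))"
      using load n unfolding L_def by (simp add: divide_le_eq mult.commute)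
    moreover have "real n powr (-3) = exp (- 3 * L)" using n unfolding L_def by (simp add: powr_def)
    ultimately have "\<mu> \<le> exp (- (L powr \<sigma>)) + exp (- 3 * L)" unfolding \<mu>_def by simp
    moreover have "0 \<le> \<mu>" unfolding \<mu>_def by (simp add: sum_nonneg)
    ultimately show ?thesis
      using chernoff_exponent_le[of "L powr \<sigma>" L \<mu> Y] s sL Y unfolding L_def by simp
  qed
  finally show ?thesis unfolding L_def Y_def by (simp add: powr_add)
qed

theorem lemma3p5:
  fixes \<sigma> \<delta> :: real
  assumes "0 < \<sigma>" "\<sigma> < 1" "0 < \<delta>"
  shows "\<exists>N. \<forall>n \<ge> N. \<forall>(M :: nat \<Rightarrow> (nat \<times> nat) set) (x :: nat \<Rightarrow> nat) (t1 :: nat) (t2 :: nat) (y :: nat \<Rightarrow> real).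
    (\<forall>t. is_matching n (M t)) \<longrightarrow>
    real (\<Sum>v\<in>{0..<n}. x v) \<le> real n * exp (- (ln (real n) powr \<sigma>)) \<longrightarrow>
    t1 < t2 \<longrightarrow>
    smoothing n M t1 t2 (real n) (real n powr (-3)) \<longrightarrow>
    (\<forall>v\<in>{0..<n}. 0 \<le> y v) \<longrightarrow> (\<Sum>v\<in>{0..<n}. y v) = 1 \<longrightarrow>
    measure_pmf.prob (disc_run M t1 (t2 - t1) x)
      {x'. (\<Sum>v\<in>{0..<n}. y v * real (x' v)) \<ge>
             exp (- (1/5) * ln (real n) powr \<sigma>) + 8 * Max (y ` {0..<n}) * ln (real n) powr \<delta>}
    \<le> exp (- (ln (real n) powr (\<delta> + \<sigma>)) / 6)"
proof -
  obtain N where "\<And>n. N \<le> n \<Longrightarrow> 48 \<le> ln (real n) powr \<sigma>"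
    using eventually_le_ln_powr[OF assms(1)] unfolding eventually_sequentially by blast
  then show ?thesis
    using weighted_load_tail_bound[OF assms(1,2)] by blast
qed

end
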